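(* Let $\phi$ be a Young function satisfying the $\Delta_2$-condition, $w$ a weight function, and let $l_{(\phi,w)}$ be the Orlicz-Lorentz sequence space, i.e. the Orlicz-Lorentz space $L_{(\phi,w)}$ over $(\mathbb{N},2^{\mathbb{N}},\nu)$ with $\nu$ the counting measure. Let $\Psi:\mathbb{N}\to\mathbb{N}$ induce the composition operator $C_\Psi f=f\circ\Psi$ on $l_{(\phi,w)}$. Then $\mathcal{A}(C_\Psi)=\infty$ if and only if there exists a sequence $(n_m)_{m\ge1}$ of distinct natural numbers such that $n_m\notin\Psi^m(\mathbb{N})$ but $n_m\in\Psi^{m-1}(\mathbb{N})$ for each $m\ge1$.
   Context: A Young function is a convex $\phi:[0,\infty)\to[0,\infty)$ with $\phi(x)=0\iff x=0$ and $\lim_{x\to\infty}\phi(x)=\infty$; $\Delta_2$-condition: $\phi(2x)\le k\phi(x)$ for some $k>0$ and all $x>0$. A weight function is a non-increasing locally integrable $w:(0,\infty)\to(0,\infty)$ with $\int_0^\infty w=\infty$. For $f:\mathbb{N}\to\mathbb{C}$, $\nu_f(s)=\#\{n:|f(n)|>s\}$, $f^*(t)=\inf\{s>0:\nu_f(s)\le t\}$; $l_{(\phi,w)}$ is the space of $f$ with $\int_0^\infty\phi(\alpha f^*(t))w(t)\,dt<\infty$ for some $\alpha>0$, with the Luxemburg norm. $\Psi^0=\mathrm{id}$. The ascent $\mathcal{A}(T)$ is the smallest integer $m$ with $\mathcal{N}(T^m)=\mathcal{N}(T^{m+1})$ ($\mathcal{N}$ = kernel), and $\infty$ if no such $m$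 exists. *)

theory Defs
  imports "HOL-Analysis.Analysis" "HOL-Library.Extended_Nat"
begin

definition young_function :: "(real \<Rightarrow> real) \<Rightarrow> bool" where
  "young_function \<phi> \<longleftrightarrow>
     convex_on {0..} \<phi> \<and> (\<forall>x\<ge>0. \<phi> x \<ge> 0) \<and>
     (\<forall>x\<ge>0. \<phi> x = 0 \<longleftrightarrow> x = 0) \<and> filterlim \<phi> at_top at_top"

definition delta2 :: "(real \<Rightarrow> real) \<Rightarrow> bool" where
  "delta2 \<phi> \<longleftrightarrow> (\<exists>k>0. \<forall>x>0. \<phi> (2 * x) \<le> k * \<phi> x)"

definition weight_function :: "(real \<Rightarrow> real) \<Rightarrow> bool" where
  "weight_function w \<longleftrightarrow>
     (\<forall>t>0. w t > 0) \<and> (\<forall>s t. 0 < s \<longrightarrow> s \<le> t \<longrightarrow> w t \<le> w s) \<and>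
     (\<forall>t>0. set_integrable lborel {0<..t} w) \<and>
     (\<integral>\<^sup>+ t\<in>{0<..}. ennreal (w t) \<partial>lborel) = \<infinity>"

definition distr_fun :: "(nat \<Rightarrow> complex) \<Rightarrow> real \<Rightarrow> ennreal" where
  "distr_fun f s = (if finite {n. norm (f n) > s} then of_nat (card {n. norm (f n) > s}) else \<infinity>)"

text \<open>Decreasing rearrangement (value infinity if the defining set is empty).\<close>
definition decr_rearr :: "(nat \<Rightarrow> complex) \<Rightarrow> real \<Rightarrow> ennreal" where
  "decr_rearr f t = Inf {ennreal s | s. s > 0 \<and> distr_fun f s \<le> ennreal t}"

definition modular :: "(real \<Rightarrow> real) \<Rightarrow> (real \<Rightarrow> real) \<Rightarrow> (nat \<Rightarrow> complex) \<Rightarrow> ennreal" where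
  "modular \<phi> w f = (\<integral>\<^sup>+ t\<in>{0<..}.
      (if decr_rearr f t = \<infinity> then \<infinity> else ennreal (\<phi> (enn2real (decr_rearr f t)) * w t)) \<partial>lborel)"

definition orlicz_lorentz_seq :: "(real \<Rightarrow> real) \<Rightarrow> (real \<Rightarrow> real) \<Rightarrow> (nat \<Rightarrow> complex) set" where
  "orlicz_lorentz_seq \<phi> w = {f. \<exists>\<alpha>>0. modular \<phi> w (\<lambda>n. of_real \<alpha> * f n) < \<infinity>}"

definition kernel_pow :: "('b \<Rightarrow> 'c::zero) set \<Rightarrow> (('b \<Rightarrow> 'c) \<Rightarrow> ('b \<Rightarrow> 'c)) \<Rightarrow> nat \<Rightarrow> ('b \<Rightarrow> 'c) set" where
  "kernel_pow S T m = {f \<in> S. (T ^^ m) f = (\<lambda>_. 0)}"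

definition ascent :: "('b \<Rightarrow> 'c::zero) set \<Rightarrow> (('b \<Rightarrow> 'c) \<Rightarrow> ('b \<Rightarrow> 'c)) \<Rightarrow> enat" where
  "ascent S T = (if \<exists>m. kernel_pow S T m = kernel_pow S T (Suc m)
                 then enat (LEAST m. kernel_pow S T m = kernel_pow S T (Suc m)) else \<infinity>)"

definition comp_op :: "(nat \<Rightarrow> nat) \<Rightarrow> (nat \<Rightarrow> complex) \<Rightarrow> (nat \<Rightarrow> complex)" where
  "comp_op \<Psi> f = f \<circ> \<Psi>"

end

theory Submission
  imports Defs
begin

(* Since C_\<Psi>^m f = f \<circ> \<Psi>^m, the kernel of C_\<Psi>^m consists of the sequences in the space
   that vanish on \<Psi>^m(N).  Every unit vector lies in l_(\<phi>,w) (its decreasing rearrangement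
   is the indicator of (0,1), and w is integrable near 0), so the kernels of C_\<Psi>^m and
   C_\<Psi>^(m+1) coincide exactly when \<Psi>^m(N) = \<Psi>^(m+1)(N).  Thus the ascent is infinite iff
   the decreasing chain of images never stabilises, i.e. iff there are points
   n_m \<in> \<Psi>^(m-1)(N) - \<Psi>^m(N) for all m \<ge> 1; such points are automatically distinct, the
   differences of a decreasing chain being disjoint. *)

lemma decr_rearr_le:
  assumes "s > 0" and "distr_fun f s \<le> ennreal t"
  shows "decr_rearr f t \<le> ennreal s"
  unfolding decr_rearr_def using assms by (auto intro: Inf_lower)

lemma decr_rearr_ge:
  assumes "\<And>s. s > 0 \<Longrightarrow> distr_fun f s \<le> ennreal t \<Longrightarrow> c \<le> s"
  shows "ennreal c \<le> decr_rearr f t"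
  unfolding decr_rearr_def using assms by (auto intro!: Inf_greatest)

lemma distr_fun_indicator_singleton:
  assumes "s \<ge> 0"
  shows "distr_fun (indicator {p}) s = (if s < 1 then 1 else 0)"
proof -
  have "{n. norm (indicator {p} n :: complex) > s} = (if s < 1 then {p} else {})"
    using assms by (auto simp: indicator_def)
  then show ?thesis unfolding distr_fun_def by simp
qed

lemma decr_rearr_indicator_singleton:
  assumes "t > 0"
  shows "decr_rearr (indicator {p}) t = (if t < 1 then 1 else 0)"
proof (cases "t < 1")
  case True
  have "decr_rearr (indicator {p}) t \<le> ennreal 1"
    by (rule decr_rearr_le) (simp_all add: distr_fun_indicator_singleton)
  moreover have "ennreal 1 \<le> decr_rearr (indicator {p}) t"
    using True assms by (intro decr_rearr_ge) (auto simp: distr_fun_indicator_singleton split: if_splits)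
  ultimately show ?thesis using True by simp
next
  case False
  have "decr_rearr (indicator {p}) t \<le> 0 + ennreal e" if "e > 0" for e
    using that False by (simp add: decr_rearr_le distr_fun_indicator_singleton)
  then have "decr_rearr (indicator {p}) t \<le> 0" by (rule ennreal_le_epsilon)
  then show ?thesis using False by simp
qed

lemma modular_indicator_singleton_finite:
  assumes "young_function \<phi>" and "weight_function w"
  shows "modular \<phi> w (indicator {p}) < \<infinity>"
proof -
  have \<phi>0: "\<phi> 0 = 0" and \<phi>1: "\<phi> 1 \<ge> 0"
    using assms(1) unfolding young_function_def by auto
  have "set_integrable lborel {0<..1} w"
    using assms(2) unfolding weight_function_def by auto
  then have "integrable lborel (\<lambda>t. \<phi> 1 * (indicator {0<..1} t *\<^sub>R w t))"
    unfolding set_integrable_def by (rule integrable_mult_right)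
  then have finite: "(\<integral>\<^sup>+t. ennreal (norm (\<phi> 1 * (indicator {0<..1} t *\<^sub>R w t))) \<partial>lborel) < \<infinity>"
    unfolding integrable_iff_bounded by blast
  have "modular \<phi> w (indicator {p})
      \<le> (\<integral>\<^sup>+t. ennreal (norm (\<phi> 1 * (indicator {0<..1} t *\<^sub>R w t))) \<partial>lborel)"
    unfolding modular_def
  proof (intro nn_integral_mono)
    fix t :: real
    show "(if decr_rearr (indicator {p}) t = \<infinity> then \<infinity>
            else ennreal (\<phi> (enn2real (decr_rearr (indicator {p}) t)) * w t)) * indicator {0<..} t
          \<le> ennreal (norm (\<phi> 1 * (indicator {0<..1} t *\<^sub>R w t)))"
    proof (cases "t > 0")
      case True
      then have "w t > 0" using assms(2) unfolding weight_function_def by auto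
      then show ?thesis using True \<phi>0 \<phi>1 by (simp add: decr_rearr_indicator_singleton abs_mult)
    qed simp
  qed
  with finite show ?thesis by order
qed

lemma indicator_singleton_in_orlicz_lorentz_seq:
  assumes "young_function \<phi>" and "weight_function w"
  shows "indicator {p} \<in> orlicz_lorentz_seq \<phi> w"
  unfolding orlicz_lorentz_seq_def
  using modular_indicator_singleton_finite[OF assms] by (intro CollectI exI[of _ 1]) simp

lemma funpow_comp_op: "(comp_op \<Psi> ^^ m) f = f \<circ> (\<Psi> ^^ m)"
  by (induction m) (simp_all add: comp_op_def funpow_swap1)

lemma kernel_pow_comp_op:
  "kernel_pow S (comp_op \<Psi>) m = {f \<in> S. \<forall>x \<in> range (\<Psi> ^^ m). f x = 0}"
  unfolding kernel_pow_def funpow_comp_op by (auto simp: fun_eq_iff)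

lemma decseq_range_funpow: "decseq (\<lambda>m. range ((f :: 'a \<Rightarrow> 'a) ^^ m))"
proof (rule decseq_SucI)
  fix m
  have "range (f ^^ Suc m) = (f ^^ m) ` range f"
    by (simp only: funpow_Suc_right image_comp)
  then show "range (f ^^ Suc m) \<subseteq> range (f ^^ m)" by auto
qed

lemma kernel_pow_comp_op_Suc_eq_iff:
  assumes "\<And>p. indicator {p} \<in> S"
  shows "kernel_pow S (comp_op \<Psi>) m = kernel_pow S (comp_op \<Psi>) (Suc m)
    \<longleftrightarrow> range (\<Psi> ^^ m) = range (\<Psi> ^^ Suc m)"
proof
  assume kernels_eq: "kernel_pow S (comp_op \<Psi>) m = kernel_pow S (comp_op \<Psi>) (Suc m)"
  show "range (\<Psi> ^^ m) = range (\<Psi> ^^ Suc m)"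
  proof (rule ccontr)
    assume "range (\<Psi> ^^ m) \<noteq> range (\<Psi> ^^ Suc m)"
    moreover have "range (\<Psi> ^^ Suc m) \<subseteq> range (\<Psi> ^^ m)"
      using decseq_range_funpow by (rule decseq_SucD)
    ultimately obtain p where p: "p \<in> range (\<Psi> ^^ m)" "p \<notin> range (\<Psi> ^^ Suc m)"
      by blast
    have "indicator {p} \<in> kernel_pow S (comp_op \<Psi>) (Suc m)"
      using assms p(2) by (auto simp: kernel_pow_comp_op indicator_def)
    moreover have "indicator {p} \<notin> kernel_pow S (comp_op \<Psi>) m"
    proof -
      have "indicator {p} p \<noteq> (0 :: complex)" by simp
      with p(1) show ?thesis unfolding kernel_pow_comp_op by blast
    qed
    ultimately show False using kernels_eq by simp
  qed
qed (simp add: kernel_pow_comp_op)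

lemma ascent_comp_op_eq_infinity_iff:
  assumes "\<And>p. indicator {p} \<in> S"
  shows "ascent S (comp_op \<Psi>) = \<infinity> \<longleftrightarrow> (\<forall>m. range (\<Psi> ^^ m) \<noteq> range (\<Psi> ^^ Suc m))"
  unfolding ascent_def kernel_pow_comp_op_Suc_eq_iff[OF assms] by simp

lemma inj_on_witnesses_of_decseq:
  fixes A :: "nat \<Rightarrow> 'a set"
  assumes "decseq A" and "\<And>m. m \<ge> 1 \<Longrightarrow> n m \<in> A (m - 1) - A m"
  shows "inj_on n {1..}"
proof (rule linorder_inj_onI')
  fix a b :: nat
  assume "a \<in> {1..}" and "b \<in> {1..}" and "a < b"
  then have "A (b - 1) \<subseteq> A a" and "n b \<in> A (b - 1)" and "n a \<notin> A a"
    using assms by (simp_all add: decseqD)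
  then show "n a \<noteq> n b" by auto
qed

lemma decseq_strict_iff_witnesses:
  fixes A :: "nat \<Rightarrow> 'a set"
  assumes "decseq A"
  shows "(\<forall>m. A m \<noteq> A (Suc m))
    \<longleftrightarrow> (\<exists>n. inj_on n {1..} \<and> (\<forall>m\<ge>1. n m \<notin> A m \<and> n m \<in> A (m - 1)))"
proof
  assume strict: "\<forall>m. A m \<noteq> A (Suc m)"
  have "\<exists>x. x \<in> A (m - 1) - A m" if "m \<ge> 1" for m
  proof -
    have "A m \<subseteq> A (m - 1)" and "A m \<noteq> A (m - 1)"
      using decseq_SucD[OF assms, of "m - 1"] strict[rule_format, of "m - 1"] that by simp_all
    then show ?thesis by blast
  qed
  then obtain n where n: "\<And>m. m \<ge> 1 \<Longrightarrow> n m \<in> A (m - 1) - A m" by metis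
  moreover have "inj_on n {1..}" using assms n by (rule inj_on_witnesses_of_decseq)
  ultimately show "\<exists>n. inj_on n {1..} \<and> (\<forall>m\<ge>1. n m \<notin> A m \<and> n m \<in> A (m - 1))"
    by blast
next
  assume "\<exists>n. inj_on n {1..} \<and> (\<forall>m\<ge>1. n m \<notin> A m \<and> n m \<in> A (m - 1))"
  then obtain n where n: "\<forall>m\<ge>1. n m \<notin> A m \<and> n m \<in> A (m - 1)" by blast
  show "\<forall>m. A m \<noteq> A (Suc m)"
  proof
    fix m
    from n[rule_format, of "Suc m"] show "A m \<noteq> A (Suc m)" by auto
  qed
qed

theorem theorem3p10:
  fixes \<phi> w :: "real \<Rightarrow> real" and \<Psi> :: "nat \<Rightarrow> nat"
  assumes "young_function \<phi>" and "delta2 \<phi>" and "weight_function w"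
    and "\<forall>f \<in> orlicz_lorentz_seq \<phi> w. comp_op \<Psi> f \<in> orlicz_lorentz_seq \<phi> w"
  shows "ascent (orlicz_lorentz_seq \<phi> w) (comp_op \<Psi>) = \<infinity> \<longleftrightarrow>
    (\<exists>n :: nat \<Rightarrow> nat. inj_on n {1..} \<and>
       (\<forall>m\<ge>1. n m \<notin> range (\<Psi> ^^ m) \<and> n m \<in> range (\<Psi> ^^ (m - 1))))"
proof -
  have "\<And>p. indicator {p} \<in> orlicz_lorentz_seq \<phi> w"
    using assms(1,3) by (rule indicator_singleton_in_orlicz_lorentz_seq)
  then have "ascent (orlicz_lorentz_seq \<phi> w) (comp_op \<Psi>) = \<infinity>
      \<longleftrightarrow> (\<forall>m. range (\<Psi> ^^ m) \<noteq> range (\<Psi> ^^ Suc m))"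
    by (rule ascent_comp_op_eq_infinity_iff)
  also have "\<dots> \<longleftrightarrow> (\<exists>n :: nat \<Rightarrow> nat. inj_on n {1..} \<and>
       (\<forall>m\<ge>1. n m \<notin> range (\<Psi> ^^ m) \<and> n m \<in> range (\<Psi> ^^ (m - 1))))"
    by (rule decseq_strict_iff_witnesses[OF decseq_range_funpow])
  finally show ?thesis .
qed

end
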